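(* Two elements $a,b\in C\ell_{1,2}$, neither of which lies in the center $\mathbb{R}+\mathbb{R}e_7$ of $C\ell_{1,2}$, are similar if and only if $\mathrm{Cre}(a)=\mathrm{Cre}(b)$, $N(a)=N(b)$ and $T(a)=T(b)$.
   Context: $C\ell_{1,2}$ is the real Clifford algebra generated by $i_1,i_2,i_3$ with $i_1^2=1$, $i_2^2=i_3^2=-1$ and $i_ti_m=-i_mi_t$ for $t\neq m$, with real basis $e_0=1$, $e_1=i_1$, $e_2=i_2$, $e_3=i_1i_2$, $e_4=i_3$, $e_5=i_1i_3$, $e_6=i_2i_3$, $e_7=i_1i_2i_3$; its center is $\mathbb{R}+\mathbb{R}e_7$. For $a=\sum_{t=0}^7 a_te_t$ ($a_t\in\mathbb{R}$) define: $\mathrm{Cre}(a)=a_0+a_7e_7$; $N(a)=a_0^2-a_1^2+a_2^2-a_3^2+a_4^2-a_5^2+a_6^2-a_7^2$; $T(a)=a_0a_7+a_2a_5-a_1a_6-a_3a_4$; $P(a)=N(a)^2+4T(a)^2$. Let $Z(C\ell_{1,2})=\{a\in C\ell_{1,2}:P(a)=0\}$. Two elements $a,b\in C\ell_{1,2}$ are called similar if there exists $q\in C\ell_{1,2}\setminus Z(C\ell_{1,2})$ with $qa=bq$. *)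

theory Defs
  imports Complex_Main
begin

text \<open>An element is represented by its 8 real
coordinates a_0..a_7 w.r.t. the basis e_0..e_7 of the paper. The basis index k
is read as a bitmask: bit 0 = i1, bit 1 = i2, bit 2 = i3, so
e_1 = i1, e_2 = i2, e_3 = i1 i2, e_4 = i3, e_5 = i1 i3, e_6 = i2 i3, e_7 = i1 i2 i3,
exactly as in the paper.\<close>

typedef cl12 = "{f :: nat \<Rightarrow> real. \<forall>k\<ge>8. f k = 0}"
  by (rule exI[of _ "\<lambda>_. 0"]) simp

setup_lifting type_definition_cl12

lift_definition coord :: "cl12 \<Rightarrow> nat \<Rightarrow> real" is "\<lambda>f. f" .

definition bitm :: "nat \<Rightarrow> nat \<Rightarrow> bool" where
  "bitm k t = odd (k div 2 ^ t)"

text \<open>Sign in e_A e_B = sign A B * e_(A xor B), for increasing-order blades: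
(-1)^(number of transpositions) times the squares i1^2 = 1, i2^2 = i3^2 = -1.\<close>
definition blade_sign :: "nat \<Rightarrow> nat \<Rightarrow> real" where
  "blade_sign A B =
     (-1) ^ (card {(s,t). s < 3 \<and> t < 3 \<and> bitm A s \<and> bitm B t \<and> t < s}
             + card {t. t \<in> {1,2} \<and> bitm A t \<and> bitm B t})"

definition blade_xor :: "nat \<Rightarrow> nat \<Rightarrow> nat" where
  "blade_xor A B = (\<Sum>t<3. (if bitm A t \<noteq> bitm B t then 2 ^ t else 0))"

instantiation cl12 :: "{zero, one, plus, times, minus, uminus}"
begin
lift_definition zero_cl12 :: cl12 is "\<lambda>_. 0" by simp
lift_definition one_cl12 :: cl12 is "\<lambda>k. if k = 0 then 1 else 0" by simp
lift_definition plus_cl12 :: "cl12 \<Rightarrow> cl12 \<Rightarrow> cl12" is "\<lambda>f g k. f k + g k" by simp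
lift_definition minus_cl12 :: "cl12 \<Rightarrow> cl12 \<Rightarrow> cl12" is "\<lambda>f g k. f k - g k" by simp
lift_definition uminus_cl12 :: "cl12 \<Rightarrow> cl12" is "\<lambda>f k. - f k" by simp
lift_definition times_cl12 :: "cl12 \<Rightarrow> cl12 \<Rightarrow> cl12" is
  "\<lambda>f g k. if k < 8 then
     (\<Sum>i<8. \<Sum>j<8. if blade_xor i j = k then blade_sign i j * f i * g j else 0)
   else 0" by simp
instance ..
end

lift_definition Cre :: "cl12 \<Rightarrow> cl12" is "\<lambda>f m. if m = 0 \<or> m = 7 then f m else 0" by auto

definition Nrm :: "cl12 \<Rightarrow> real" where
  "Nrm a = (coord a 0)^2 - (coord a 1)^2 + (coord a 2)^2 - (coord a 3)^2
          + (coord a 4)^2 - (coord a 5)^2 + (coord a 6)^2 - (coord a 7)^2"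

definition Trc :: "cl12 \<Rightarrow> real" where
  "Trc a = coord a 0 * coord a 7 + coord a 2 * coord a 5
         - coord a 1 * coord a 6 - coord a 3 * coord a 4"

definition Pfun :: "cl12 \<Rightarrow> real" where
  "Pfun a = (Nrm a)^2 + 4 * (Trc a)^2"

definition Zset :: "cl12 set" where
  "Zset = {a. Pfun a = 0}"

definition center12 :: "cl12 set" where
  "center12 = {a. \<forall>k. k \<noteq> 0 \<and> k \<noteq> 7 \<longrightarrow> coord a k = 0}"

definition similar :: "cl12 \<Rightarrow> cl12 \<Rightarrow> bool" where
  "similar a b \<longleftrightarrow> (\<exists>q. q \<notin> Zset \<and> q * a = b * q)"

end

theory Submission
  imports Defs
begin

text \<open>The map \<open>mat_of_cl12\<close> is an isomorphism of \<open>Cl(1,2)\<close> onto the complex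
  \<open>2 \<times> 2\<close> matrices. It sends \<open>Cre a\<close> to half the trace and \<open>N(a) + 2 \<i> T(a)\<close> to the
  determinant, so \<open>P(a)\<close> is the squared modulus of the determinant, \<open>Z(Cl(1,2))\<close>
  corresponds to the singular matrices, and the centre to the scalar matrices. Over a field, a
  non-scalar \<open>2 \<times> 2\<close> matrix has a cyclic vector and is therefore similar to the companion
  matrix of its characteristic polynomial, which depends only on trace and determinant.\<close>

datatype 'a mat2 = Mat2 'a 'a 'a 'a

instantiation mat2 :: (semiring_1) monoid_mult
begin

definition one_mat2 :: "'a mat2" where
  "1 = Mat2 1 0 0 1"

fun times_mat2 :: "'a mat2 \<Rightarrow> 'a mat2 \<Rightarrow> 'a mat2" where
  "Mat2 a b c d * Mat2 e f g h = Mat2 (a * e + b * g) (a * f + b * h) (c * e + d * g) (c * f + d * h)"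

instance
proof
  fix X Y Z :: "'a mat2"
  show "X * Y * Z = X * (Y * Z)"
    by (cases X; cases Y; cases Z) (simp add: algebra_simps)
  show "1 * X = X" "X * 1 = X"
    by (cases X; simp add: one_mat2_def)+
qed

end

fun det_mat2 :: "'a::comm_ring_1 mat2 \<Rightarrow> 'a" where
  "det_mat2 (Mat2 a b c d) = a * d - b * c"

fun trace_mat2 :: "'a::semiring_1 mat2 \<Rightarrow> 'a" where
  "trace_mat2 (Mat2 a b c d) = a + d"

fun scalar_mat2 :: "'a::zero mat2 \<Rightarrow> bool" where
  "scalar_mat2 (Mat2 a b c d) \<longleftrightarrow> b = 0 \<and> c = 0 \<and> a = d"

definition companion_mat2 :: "'a::comm_ring_1 \<Rightarrow> 'a \<Rightarrow> 'a mat2" where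
  "companion_mat2 t d = Mat2 0 (- d) 1 t"

fun inverse_mat2 :: "'a::field mat2 \<Rightarrow> 'a mat2" where
  "inverse_mat2 (Mat2 a b c d) =
     (let k = inverse (a * d - b * c) in Mat2 (k * d) (- k * b) (- k * c) (k * a))"

lemma det_mat2_mult: "det_mat2 (X * Y) = det_mat2 X * det_mat2 Y"
  by (cases X; cases Y) (simp add: algebra_simps)

lemma trace_mat2_mult_commute: "trace_mat2 (X * Y) = trace_mat2 (Y * (X :: 'a::comm_semiring_1 mat2))"
  by (cases X; cases Y) (simp add: algebra_simps)

lemma
  assumes "det_mat2 X \<noteq> 0"
  shows mult_inverse_mat2: "X * inverse_mat2 X = 1"
    and inverse_mat2_mult: "inverse_mat2 X * X = 1"
    and det_inverse_mat2: "det_mat2 (inverse_mat2 X) \<noteq> 0"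
proof -
  obtain a b c d where X: "X = Mat2 a b c d" by (cases X)
  define k where "k = inverse (a * d - b * c)"
  have "k * (a * d - b * c) = 1"
    using assms X by (simp add: k_def)
  then have "k * a * d - k * b * c = 1"
    by (simp add: algebra_simps)
  then show "X * inverse_mat2 X = 1" "inverse_mat2 X * X = 1"
    by (simp_all add: X one_mat2_def flip: k_def) (simp_all add: algebra_simps)
  then show "det_mat2 (inverse_mat2 X) \<noteq> 0"
    using det_mat2_mult[of X "inverse_mat2 X"] by (auto simp: one_mat2_def)
qed

definition similar_mat2 :: "'a::comm_ring_1 mat2 \<Rightarrow> 'a mat2 \<Rightarrow> bool" where
  "similar_mat2 A B \<longleftrightarrow> (\<exists>Q. det_mat2 Q \<noteq> 0 \<and> Q * A = B * Q)"

lemma similar_mat2_sym: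
  fixes A B :: "'a::field mat2"
  assumes "similar_mat2 A B"
  shows "similar_mat2 B A"
proof -
  obtain Q where Q: "det_mat2 Q \<noteq> 0" "Q * A = B * Q"
    using assms unfolding similar_mat2_def by blast
  have "inverse_mat2 Q * B = inverse_mat2 Q * B * (Q * inverse_mat2 Q)"
    using Q(1) by (simp add: mult_inverse_mat2)
  also have "\<dots> = inverse_mat2 Q * (Q * A) * inverse_mat2 Q"
    by (simp add: Q(2) mult.assoc)
  also have "\<dots> = A * inverse_mat2 Q"
    using Q(1) by (simp add: inverse_mat2_mult flip: mult.assoc)
  finally show ?thesis
    unfolding similar_mat2_def using Q(1) det_inverse_mat2 by blast
qed

lemma similar_mat2_trans:
  fixes A B C :: "'a::idom mat2"
  assumes "similar_mat2 A B" "similar_mat2 B C"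
  shows "similar_mat2 A C"
proof -
  obtain P Q where "det_mat2 P \<noteq> 0" "P * A = B * P" "det_mat2 Q \<noteq> 0" "Q * B = C * Q"
    using assms unfolding similar_mat2_def by blast
  then have "det_mat2 (Q * P) \<noteq> 0" "(Q * P) * A = C * (Q * P)"
    by (simp_all add: det_mat2_mult mult.assoc flip: mult.assoc[of Q])
  then show ?thesis
    unfolding similar_mat2_def by blast
qed

lemma similar_mat2_imp_trace_det:
  fixes A B :: "'a::field mat2"
  assumes "similar_mat2 A B"
  shows "trace_mat2 A = trace_mat2 B \<and> det_mat2 A = det_mat2 B"
proof
  obtain Q where Q: "det_mat2 Q \<noteq> 0" "Q * A = B * Q"
    using assms unfolding similar_mat2_def by blast
  have "det_mat2 Q * det_mat2 A = det_mat2 Q * det_mat2 B"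
    using Q(2) by (metis det_mat2_mult mult.commute)
  then show "det_mat2 A = det_mat2 B"
    using Q(1) by simp
  have "A = inverse_mat2 Q * (B * Q)"
    using Q by (metis inverse_mat2_mult mult.assoc mult_1_left)
  also have "trace_mat2 \<dots> = trace_mat2 (B * (Q * inverse_mat2 Q))"
    by (simp add: trace_mat2_mult_commute[of "inverse_mat2 Q"] mult.assoc)
  finally show "trace_mat2 A = trace_mat2 B"
    using Q(1) by (simp add: mult_inverse_mat2)
qed

text \<open>One of \<open>e\<^sub>1\<close>, \<open>e\<^sub>2\<close>, \<open>e\<^sub>1 + e\<^sub>2\<close> is a cyclic vector \<open>v\<close> of a non-scalar \<open>A\<close>;
  the witness \<open>S\<close> has columns \<open>v\<close> and \<open>A v\<close>, and \<open>A S = S C\<close> is Cayley-Hamilton.\<close>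
lemma companion_similar_mat2:
  fixes A :: "'a::comm_ring_1 mat2"
  assumes "\<not> scalar_mat2 A"
  shows "similar_mat2 (companion_mat2 (trace_mat2 A) (det_mat2 A)) A"
proof -
  obtain p q r s where A: "A = Mat2 p q r s" by (cases A)
  have "\<exists>S. det_mat2 S \<noteq> 0 \<and> S * companion_mat2 (p + s) (p * s - q * r) = A * S"
  proof (cases "r = 0")
    case False
    then show ?thesis
      by (intro exI[of _ "Mat2 1 p 0 r"]) (simp add: A companion_mat2_def algebra_simps)
  next
    case r: True
    show ?thesis
    proof (cases "q = 0")
      case False
      then show ?thesis
        by (intro exI[of _ "Mat2 0 q 1 s"]) (simp add: A companion_mat2_def algebra_simps)
    next
      case True
      with r assms A have "p \<noteq> s" by auto
      then show ?thesis using True r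
        by (intro exI[of _ "Mat2 1 p 1 s"]) (simp add: A companion_mat2_def algebra_simps)
    qed
  qed
  then show ?thesis
    unfolding similar_mat2_def by (simp add: A)
qed

theorem similar_mat2_iff_trace_det:
  fixes A B :: "'a::field mat2"
  assumes "\<not> scalar_mat2 A" "\<not> scalar_mat2 B"
  shows "similar_mat2 A B \<longleftrightarrow> trace_mat2 A = trace_mat2 B \<and> det_mat2 A = det_mat2 B"
proof
  assume "trace_mat2 A = trace_mat2 B \<and> det_mat2 A = det_mat2 B"
  then have "similar_mat2 (companion_mat2 (trace_mat2 A) (det_mat2 A)) B"
    using companion_similar_mat2[OF assms(2)] by simp
  with companion_similar_mat2[OF assms(1)] show "similar_mat2 A B"
    by (blast intro: similar_mat2_sym similar_mat2_trans)
qed (rule similar_mat2_imp_trace_det)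

lemma blade_sign_eq:
  "blade_sign A B = (-1) ^ (of_bool (bitm A 1 \<and> bitm B 0) + of_bool (bitm A 2 \<and> bitm B 0)
     + of_bool (bitm A 2 \<and> bitm B 1) + of_bool (bitm A 1 \<and> bitm B 1) + of_bool (bitm A 2 \<and> bitm B 2))"
proof -
  have "{(s, t). s < 3 \<and> t < 3 \<and> bitm A s \<and> bitm B t \<and> t < s}
      = {(1, 0), (2, 0), (2::nat, 1::nat)} \<inter> {(s, t). bitm A s \<and> bitm B t}"
    by (auto simp: less_Suc_eq numeral_3_eq_3)
  moreover have "{t. t \<in> {1, 2} \<and> bitm A t \<and> bitm B t} = {1, 2::nat} \<inter> {t. bitm A t \<and> bitm B t}"
    by auto
  ultimately show ?thesis
    unfolding blade_sign_def
    by (simp only: sum_of_bool_eq[symmetric, where 'a = nat] finite.intros) simp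
qed

lemma blade_xor_eq:
  "blade_xor A B = of_bool (bitm A 0 \<noteq> bitm B 0) + 2 * of_bool (bitm A 1 \<noteq> bitm B 1)
     + 4 * of_bool (bitm A 2 \<noteq> bitm B 2)"
  by (simp add: blade_xor_def lessThan_nat_numeral)

lemma coord_times:
  "k < 8 \<Longrightarrow> coord (a * b) k =
     (\<Sum>i<8. \<Sum>j<8. if blade_xor i j = k then blade_sign i j * coord a i * coord b j else 0)"
  unfolding coord.rep_eq times_cl12.rep_eq by simp

lemma coord_times_table:
  "coord (a * b) 0 = coord a 0 * coord b 0 + coord a 1 * coord b 1 - coord a 2 * coord b 2 + coord a 3 * coord b 3
     - coord a 4 * coord b 4 + coord a 5 * coord b 5 - coord a 6 * coord b 6 - coord a 7 * coord b 7"
  "coord (a * b) 1 = coord a 0 * coord b 1 + coord a 1 * coord b 0 + coord a 2 * coord b 3 - coord a 3 * coord b 2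
     + coord a 4 * coord b 5 - coord a 5 * coord b 4 - coord a 6 * coord b 7 - coord a 7 * coord b 6"
  "coord (a * b) 2 = coord a 0 * coord b 2 + coord a 1 * coord b 3 + coord a 2 * coord b 0 - coord a 3 * coord b 1
     + coord a 4 * coord b 6 - coord a 5 * coord b 7 - coord a 6 * coord b 4 - coord a 7 * coord b 5"
  "coord (a * b) 3 = coord a 0 * coord b 3 + coord a 1 * coord b 2 - coord a 2 * coord b 1 + coord a 3 * coord b 0
     - coord a 4 * coord b 7 + coord a 5 * coord b 6 - coord a 6 * coord b 5 - coord a 7 * coord b 4"
  "coord (a * b) 4 = coord a 0 * coord b 4 + coord a 1 * coord b 5 - coord a 2 * coord b 6 + coord a 3 * coord b 7
     + coord a 4 * coord b 0 - coord a 5 * coord b 1 + coord a 6 * coord b 2 + coord a 7 * coord b 3"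
  "coord (a * b) 5 = coord a 0 * coord b 5 + coord a 1 * coord b 4 + coord a 2 * coord b 7 - coord a 3 * coord b 6
     - coord a 4 * coord b 1 + coord a 5 * coord b 0 + coord a 6 * coord b 3 + coord a 7 * coord b 2"
  "coord (a * b) 6 = coord a 0 * coord b 6 + coord a 1 * coord b 7 + coord a 2 * coord b 4 - coord a 3 * coord b 5
     - coord a 4 * coord b 2 + coord a 5 * coord b 3 + coord a 6 * coord b 0 + coord a 7 * coord b 1"
  "coord (a * b) 7 = coord a 0 * coord b 7 + coord a 1 * coord b 6 - coord a 2 * coord b 5 + coord a 3 * coord b 4
     + coord a 4 * coord b 3 - coord a 5 * coord b 2 + coord a 6 * coord b 1 + coord a 7 * coord b 0"
  by (simp_all add: coord_times lessThan_nat_numeral blade_sign_eq blade_xor_eq bitm_def)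

text \<open>\<open>i\<^sub>1\<close>, \<open>i\<^sub>2\<close>, \<open>i\<^sub>3\<close> are sent to \<open>[[0,1],[1,0]]\<close>, \<open>[[\<i>,0],[0,-\<i>]]\<close>
  and \<open>[[0,1],[-1,0]]\<close>.\<close>
definition mat_of_cl12 :: "cl12 \<Rightarrow> complex mat2" where
  "mat_of_cl12 x =
     Mat2 (Complex (coord x 0 - coord x 5) (coord x 2 + coord x 7))
          (Complex (coord x 1 + coord x 4) (coord x 6 - coord x 3))
          (Complex (coord x 1 - coord x 4) (coord x 3 + coord x 6))
          (Complex (coord x 0 + coord x 5) (coord x 7 - coord x 2))"

lemma mat_of_cl12_mult: "mat_of_cl12 (x * y) = mat_of_cl12 x * mat_of_cl12 y"
  unfolding mat_of_cl12_def coord_times_table by (simp add: complex_eq_iff algebra_simps)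

lemma coord_eq_0: "8 \<le> k \<Longrightarrow> coord x k = 0"
  using Rep_cl12[of x] by (simp add: coord.rep_eq)

lemma cl12_eqI:
  assumes "\<And>k. k < 8 \<Longrightarrow> coord x k = coord y k"
  shows "x = y"
proof -
  have "coord x k = coord y k" for k
    using assms coord_eq_0 by (cases "k < 8") simp_all
  then have "coord x = coord y" ..
  then show ?thesis
    by (simp add: coord.rep_eq Rep_cl12_inject)
qed

lemma less_8_cases: "(k::nat) < 8 \<Longrightarrow> k = 0 \<or> k = 1 \<or> k = 2 \<or> k = 3 \<or> k = 4 \<or> k = 5 \<or> k = 6 \<or> k = 7"
  by auto

lemma inj_mat_of_cl12: "inj mat_of_cl12"
proof (rule injI, rule cl12_eqI)
  fix x y :: cl12 and k :: nat
  assume "mat_of_cl12 x = mat_of_cl12 y" "k < 8"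
  then show "coord x k = coord y k"
    unfolding mat_of_cl12_def complex_eq_iff by (auto dest: less_8_cases)
qed

lift_definition cl12_of_coords :: "(nat \<Rightarrow> real) \<Rightarrow> cl12" is "\<lambda>f k. if k < 8 then f k else 0"
  by simp

lemma coord_cl12_of_coords: "k < 8 \<Longrightarrow> coord (cl12_of_coords f) k = f k"
  by (simp add: coord.rep_eq cl12_of_coords.rep_eq)

lemma surj_mat_of_cl12: "surj mat_of_cl12"
  unfolding surj_def
proof
  fix M :: "complex mat2"
  show "\<exists>x. M = mat_of_cl12 x"
  proof (cases M)
    case (Mat2 p q r s)
    let ?c = "[(Re p + Re s)/2, (Re q + Re r)/2, (Im p - Im s)/2, (Im r - Im q)/2,
               (Re q - Re r)/2, (Re s - Re p)/2, (Im q + Im r)/2, (Im p + Im s)/2]"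
    have "mat_of_cl12 (cl12_of_coords (\<lambda>k. ?c ! k)) = M"
      by (simp add: Mat2 mat_of_cl12_def coord_cl12_of_coords complex_eq_iff field_simps)
    then show ?thesis
      by metis
  qed
qed

lemma det_mat_of_cl12: "det_mat2 (mat_of_cl12 x) = Complex (Nrm x) (2 * Trc x)"
  by (simp add: mat_of_cl12_def Nrm_def Trc_def complex_eq_iff algebra_simps power2_eq_square)

lemma trace_mat_of_cl12: "trace_mat2 (mat_of_cl12 x) = Complex (2 * coord x 0) (2 * coord x 7)"
  by (simp add: mat_of_cl12_def complex_eq_iff)

lemma Pfun_eq_cmod_det: "Pfun x = (cmod (det_mat2 (mat_of_cl12 x)))\<^sup>2"
  by (simp add: Pfun_def det_mat_of_cl12 cmod_power2 power_mult_distrib)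

lemma Zset_iff_det_eq_0: "x \<in> Zset \<longleftrightarrow> det_mat2 (mat_of_cl12 x) = 0"
  by (simp add: Zset_def Pfun_eq_cmod_det)

lemma center12_iff_scalar_mat2: "x \<in> center12 \<longleftrightarrow> scalar_mat2 (mat_of_cl12 x)"
proof
  assume "x \<in> center12"
  then show "scalar_mat2 (mat_of_cl12 x)"
    by (simp add: center12_def mat_of_cl12_def complex_eq_iff)
next
  assume "scalar_mat2 (mat_of_cl12 x)"
  then have "coord x 1 = 0" "coord x 2 = 0" "coord x 3 = 0"
    "coord x 4 = 0" "coord x 5 = 0" "coord x 6 = 0"
    by (simp_all add: mat_of_cl12_def complex_eq_iff)
  then have "coord x k = 0" if "k \<noteq> 0" "k \<noteq> 7" for k
    using that coord_eq_0[of k x] less_8_cases[of k] by (cases "k < 8") auto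
  then show "x \<in> center12"
    by (simp add: center12_def)
qed

lemma similar_iff_similar_mat2: "similar a b \<longleftrightarrow> similar_mat2 (mat_of_cl12 a) (mat_of_cl12 b)"
proof -
  have "similar a b \<longleftrightarrow>
      (\<exists>q. det_mat2 (mat_of_cl12 q) \<noteq> 0 \<and> mat_of_cl12 (q * a) = mat_of_cl12 (b * q))"
    unfolding similar_def Zset_iff_det_eq_0 using inj_mat_of_cl12 by (simp add: inj_eq)
  also have "\<dots> \<longleftrightarrow> similar_mat2 (mat_of_cl12 a) (mat_of_cl12 b)"
    unfolding similar_mat2_def mat_of_cl12_mult using surj_mat_of_cl12 by (metis surjD)
  finally show ?thesis .
qed

lemma Cre_eq_iff: "Cre x = Cre y \<longleftrightarrow> coord x 0 = coord y 0 \<and> coord x 7 = coord y 7"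
proof -
  have coord_Cre: "coord (Cre z) k = (if k = 0 \<or> k = 7 then coord z k else 0)" for z k
    by (simp add: coord.rep_eq Cre.rep_eq)
  show ?thesis
    by (metis cl12_eqI coord_Cre)
qed

lemma trace_det_mat_of_cl12_eq_iff:
  "trace_mat2 (mat_of_cl12 a) = trace_mat2 (mat_of_cl12 b)
     \<and> det_mat2 (mat_of_cl12 a) = det_mat2 (mat_of_cl12 b)
   \<longleftrightarrow> Cre a = Cre b \<and> Nrm a = Nrm b \<and> Trc a = Trc b"
  by (simp add: trace_mat_of_cl12 det_mat_of_cl12 Cre_eq_iff)

theorem theorem5p1:
  fixes a b :: cl12
  assumes "a \<notin> center12" and "b \<notin> center12"
  shows "similar a b \<longleftrightarrow> (Cre a = Cre b \<and> Nrm a = Nrm b \<and> Trc a = Trc b)"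
proof -
  have "\<not> scalar_mat2 (mat_of_cl12 a)" "\<not> scalar_mat2 (mat_of_cl12 b)"
    using assms by (simp_all add: center12_iff_scalar_mat2)
  then show ?thesis
    by (simp add: similar_iff_similar_mat2 similar_mat2_iff_trace_det trace_det_mat_of_cl12_eq_iff)
qed

end
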